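(* Let $S=[S_1,\ldots,S_m]$ be a sequence of formulas and $S_i$ one of its formulas. Then both $\emptyset[S_i]\cdot S$ and $\emptyset[\neg S_i]\cdot S$ coincide with $\emptyset S$.
   Context: Propositional models are truth assignments over a finite set of variables; a formula used where a set of models is expected stands for its set of models. A doxastic state is a sequence $[C(0),\ldots,C(k)]$ of nonempty, pairwise disjoint sets of models covering all models. The flat doxastic state $\emptyset$ is $[\text{all models}]$. Lexicographic revision: $C\,\mathrm{lex}(A) = [C(0)\cap A,\ldots,C(k)\cap A, C(0)\setminus A,\ldots,C(k)\setminus A]$, empty sets discarded. For a sequence of formulas $T=[T_1,\ldots,T_n]$, $\emptyset T$ denotes $\emptyset$ revised lexicographically by $T_1$, then $T_2$, ..., then $T_n$. $\cdot$ denotes concatenation of sequences. *)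

theory Defs
  imports Main
begin

datatype 'v fml = Var 'v | Top | Bot | Neg "'v fml" | Conj "'v fml" "'v fml"
  | Disj "'v fml" "'v fml" | Imp "'v fml" "'v fml"

type_synonym 'v model = "'v \<Rightarrow> bool"

fun holds :: "'v model \<Rightarrow> 'v fml \<Rightarrow> bool" where
  "holds w (Var x) = w x"
| "holds w Top = True"
| "holds w Bot = False"
| "holds w (Neg f) = (\<not> holds w f)"
| "holds w (Conj f g) = (holds w f \<and> holds w g)"
| "holds w (Disj f g) = (holds w f \<or> holds w g)"
| "holds w (Imp f g) = (holds w f \<longrightarrow> holds w g)"

definition mods :: "'v fml \<Rightarrow> 'v model set" where
  "mods f = {w. holds w f}"

text \<open>A doxastic state is a list of sets of models [C(0),...,C(k)].\<close>
type_synonym 'v dstate = "'v model set list"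

definition flat :: "'v dstate" where
  "flat = [UNIV]"

definition lex :: "'v dstate \<Rightarrow> 'v fml \<Rightarrow> 'v dstate" where
  "lex C A = filter (\<lambda>c. c \<noteq> {})
      (map (\<lambda>c. c \<inter> mods A) C @ map (\<lambda>c. c - mods A) C)"

definition revs :: "'v dstate \<Rightarrow> 'v fml list \<Rightarrow> 'v dstate" where
  "revs C T = foldl lex C T"

end

theory Submission
  imports Defs
begin

(*
  Revising a state C by T = [T_1, ..., T_n] splits every level of C along the
  "cells" of T, the 2^n intersections of each T_j or its complement listed in
  lexicographic order, with the cells as the dominant key. Every cell of S lies
  inside or outside S_i, so splitting a cell by the levels of the state
  [S_i, not S_i] (or [not S_i, S_i]) just gives that cell back: the prefix is
  absorbed.
*)

definition cells :: "'v fml list \<Rightarrow> 'v model set list" where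
  "cells T = foldl (\<lambda>B A. map (\<lambda>X. X \<inter> mods A) B @ map (\<lambda>X. X - mods A) B) [UNIV] T"

definition refine :: "'v dstate \<Rightarrow> 'v model set list \<Rightarrow> 'v dstate" where
  "refine C B = filter (\<lambda>c. c \<noteq> {}) (concat (map (\<lambda>X. map (\<lambda>c. c \<inter> X) C) B))"

lemma cells_snoc:
  "cells (T @ [A]) = map (\<lambda>X. X \<inter> mods A) (cells T) @ map (\<lambda>X. X - mods A) (cells T)"
  by (simp add: cells_def)

lemma filter_nonempty_map_filter_nonempty:
  assumes "f {} = {}"
  shows "filter (\<lambda>c. c \<noteq> {}) (map f (filter (\<lambda>c. c \<noteq> {}) L))
       = filter (\<lambda>c. c \<noteq> {}) (map f L)"
  using assms by (induction L) auto

lemma lex_refine: "lex (refine C B) A = refine C (map (\<lambda>X. X \<inter> mods A) B @ map (\<lambda>X. X - mods A) B)"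
  unfolding lex_def refine_def filter_append
  by (simp add: filter_nonempty_map_filter_nonempty map_concat comp_def Int_assoc Int_Diff)

lemma revs_eq_refine_cells:
  assumes "{} \<notin> set C"
  shows "revs C T = refine C (cells T)"
proof (induction T rule: rev_induct)
  case Nil
  from assms have "filter (\<lambda>c. c \<noteq> {}) C = C"
    unfolding filter_id_conv by blast
  then show ?case
    by (simp add: revs_def cells_def refine_def)
next
  case (snoc A T)
  have "revs C (T @ [A]) = lex (revs C T) A" by (simp add: revs_def)
  also have "\<dots> = refine C (cells (T @ [A]))"
    unfolding snoc lex_refine cells_snoc ..
  finally show ?case .
qed

lemma cells_subset_or_disjoint:
  assumes "X \<in> set (cells T)" and "A \<in> set T"
  shows "X \<subseteq> mods A \<or> X \<inter> mods A = {}"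
  using assms
proof (induction T arbitrary: X rule: rev_induct)
  case Nil
  then show ?case by simp
next
  case (snoc B T)
  from snoc.prems(1) obtain Y where "Y \<in> set (cells T)" and "X = Y \<inter> mods B \<or> X = Y - mods B"
    by (auto simp: cells_snoc)
  show ?case
  proof (cases "A \<in> set T")
    case True
    with snoc.IH \<open>Y \<in> set (cells T)\<close> \<open>X = Y \<inter> mods B \<or> X = Y - mods B\<close>
    show ?thesis by blast
  next
    case False
    with snoc.prems(2) \<open>X = Y \<inter> mods B \<or> X = Y - mods B\<close> show ?thesis by auto
  qed
qed

lemma refine_Cons:
  "refine C (X # B) = filter (\<lambda>c. c \<noteq> {}) (map (\<lambda>c. c \<inter> X) C) @ refine C B"
  by (simp add: refine_def)

lemma refine_split_absorbed:
  assumes "\<forall>X\<in>set B. X \<subseteq> M \<or> X \<inter> M = {}"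
  shows "refine (filter (\<lambda>c. c \<noteq> {}) [M, - M]) B = refine [UNIV] B"
  using assms
proof (induction B)
  case Nil
  show ?case by (simp add: refine_def)
next
  case (Cons X B)
  then have "X \<subseteq> M \<or> X \<inter> M = {}" by simp
  then have split_X: "filter (\<lambda>c. c \<noteq> {}) [M \<inter> X, - M \<inter> X] = filter (\<lambda>c. c \<noteq> {}) [X]"
  proof
    assume "X \<subseteq> M"
    then have "M \<inter> X = X" and "- M \<inter> X = {}" by blast+
    then show ?thesis by simp
  next
    assume "X \<inter> M = {}"
    then have "M \<inter> X = {}" and "- M \<inter> X = X" by blast+
    then show ?thesis by simp
  qed
  have "refine (filter (\<lambda>c. c \<noteq> {}) [M, - M]) (X # B)
      = filter (\<lambda>c. c \<noteq> {}) [M \<inter> X, - M \<inter> X] @ refine (filter (\<lambda>c. c \<noteq> {}) [M, - M]) B"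
    unfolding refine_Cons by (subst filter_nonempty_map_filter_nonempty) simp_all
  also have "\<dots> = refine [UNIV] (X # B)"
    using Cons split_X by (simp add: refine_Cons)
  finally show ?case .
qed

lemma lex_flat: "lex flat A = filter (\<lambda>c. c \<noteq> {}) [mods A, - mods A]"
  by (simp add: lex_def flat_def Compl_eq_Diff_UNIV)

lemma revs_flat_Cons_absorbed:
  assumes "\<And>X. X \<in> set (cells S) \<Longrightarrow> X \<subseteq> mods A \<or> X \<inter> mods A = {}"
  shows "revs flat ([A] @ S) = revs flat S"
proof -
  have "revs flat ([A] @ S) = revs (lex flat A) S" by (simp add: revs_def)
  also have "\<dots> = refine (filter (\<lambda>c. c \<noteq> {}) [mods A, - mods A]) (cells S)"
    unfolding lex_flat by (rule revs_eq_refine_cells) simp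
  also have "\<dots> = refine flat (cells S)"
    unfolding flat_def using assms by (intro refine_split_absorbed ballI)
  also have "\<dots> = revs flat S"
    by (rule revs_eq_refine_cells[symmetric]) (simp add: flat_def)
  finally show ?thesis .
qed

lemma mods_Neg: "mods (Neg A) = - mods A"
  by (auto simp: mods_def)

theorem mainTheorem12:
  fixes S :: "('v::finite) fml list" and i :: nat
  assumes "i < length S"
  shows "revs flat ([S ! i] @ S) = revs flat S
       \<and> revs flat ([Neg (S ! i)] @ S) = revs flat S"
proof
  have cells_S: "X \<subseteq> mods (S ! i) \<or> X \<inter> mods (S ! i) = {}" if "X \<in> set (cells S)" for X
    using cells_subset_or_disjoint[OF that] assms by simp
  then show "revs flat ([S ! i] @ S) = revs flat S"
    by (rule revs_flat_Cons_absorbed)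
  show "revs flat ([Neg (S ! i)] @ S) = revs flat S"
  proof (rule revs_flat_Cons_absorbed)
    fix X assume "X \<in> set (cells S)"
    then have "X \<subseteq> mods (S ! i) \<or> X \<inter> mods (S ! i) = {}" by (rule cells_S)
    then show "X \<subseteq> mods (Neg (S ! i)) \<or> X \<inter> mods (Neg (S ! i)) = {}"
      unfolding mods_Neg by auto
  qed
qed

end
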